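(* Assume $u=(u_1,\dots,u_n)$ has positive entries linearly independent over $\mathbb{Q}$. Consider the formal power series in $\hbar$ $$V(t,\hbar)=\sum_{|r|\ge1}\hbar^{|r|-1}c_r(\hbar)\Big(\frac1tD_\theta\Big)^r\frac{e^{\frac{it}{2}\sum_j\theta_j}}{\prod_j(1-e^{it\theta_j})}\Bigg|_{\theta=u},$$ where $c_r(\hbar)=\sum_{i\ge0}c_{r,i}\hbar^{|r|-1+i}$. Then for every $\ell\ge0$, the coefficients of $\hbar^s$, $s\le\ell$, in $V(t,\hbar)$ (as functions of $t$) determine the coefficients of $\hbar^s$, $s\le \ell$, in $c_r(\hbar)$ for all $r$.
   Context: $r$ ranges over multi-indices in $\mathbb{Z}_{\ge0}^n$, $|r|=\sum r_j$, $D_\theta=-i(\partial_{\theta_1},\dots,\partial_{\theta_n})$. The $c_r(\hbar)$ are the coefficients of the semi-classical Birkhoff canonical form $F$ (Taylor series $\sum_{|r|\ge1}c_r(\hbar)p^r$). *)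

theory Defs
  imports "HOL-Analysis.Analysis"
begin

text \<open>Points theta of R^n are functions nat => real (coordinates 0..n-1);
  multi-indices r are functions nat => nat supported in {..<n}.\<close>

definition multi_indices :: "nat \<Rightarrow> (nat \<Rightarrow> nat) set" where
  "multi_indices n = {r. \<forall>j\<ge>n. r j = 0}"

definition mabs :: "nat \<Rightarrow> (nat \<Rightarrow> nat) \<Rightarrow> nat" where
  "mabs n r = (\<Sum>j<n. r j)"

definition partial :: "nat \<Rightarrow> ((nat \<Rightarrow> real) \<Rightarrow> complex) \<Rightarrow> (nat \<Rightarrow> real) \<Rightarrow> complex" where
  "partial j f \<theta> = vector_derivative (\<lambda>s. f (\<theta>(j := s))) (at (\<theta> j))"

definition Dpow :: "nat \<Rightarrow> (nat \<Rightarrow> nat) \<Rightarrow> ((nat \<Rightarrow> real) \<Rightarrow> complex) \<Rightarrow> (nat \<Rightarrow> real) \<Rightarrow> complex" where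
  "Dpow n r f = foldr (\<lambda>j g. ((\<lambda>h \<theta>. - \<i> * partial j h \<theta>) ^^ (r j)) g) [0..<n] f"

definition Gfun :: "nat \<Rightarrow> real \<Rightarrow> (nat \<Rightarrow> real) \<Rightarrow> complex" where
  "Gfun n t \<theta> = exp (\<i> * complex_of_real (t / 2 * (\<Sum>j<n. \<theta> j)))
      / (\<Prod>j<n. (1 - exp (\<i> * complex_of_real (t * \<theta> j))))"

definition fterm :: "nat \<Rightarrow> (nat \<Rightarrow> real) \<Rightarrow> (nat \<Rightarrow> nat) \<Rightarrow> real \<Rightarrow> complex" where
  "fterm n u r t = (1 / complex_of_real t) ^ mabs n r * Dpow n r (Gfun n t) u"

definition tdom :: "nat \<Rightarrow> (nat \<Rightarrow> real) \<Rightarrow> real set" where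
  "tdom n u = {t. t \<noteq> 0 \<and> (\<forall>j<n. exp (\<i> * complex_of_real (t * u j)) \<noteq> 1)}"

text \<open>Coefficients: c r i is the coefficient c_{r,i} of hbar^{|r|-1+i} in c_r(hbar).
  Coefficient of hbar^s in V(t,hbar): sum over r, i with |r|-1+i = s.\<close>
definition Vcoef :: "nat \<Rightarrow> (nat \<Rightarrow> real) \<Rightarrow> ((nat \<Rightarrow> nat) \<Rightarrow> nat \<Rightarrow> real) \<Rightarrow> nat \<Rightarrow> real \<Rightarrow> complex" where
  "Vcoef n u c s t = (\<Sum>r\<in>{r\<in>multi_indices n. 1 \<le> mabs n r \<and> mabs n r \<le> s + 1}.
      complex_of_real (c r (s + 1 - mabs n r)) * fterm n u r t)"

definition rat_lin_indep :: "nat \<Rightarrow> (nat \<Rightarrow> real) \<Rightarrow> bool" where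
  "rat_lin_indep n u \<longleftrightarrow>
     (\<forall>q :: nat \<Rightarrow> rat. (\<Sum>j<n. real_of_rat (q j) * u j) = 0 \<longrightarrow> (\<forall>j<n. q j = 0))"

end

theory Submission
  imports Defs
begin

text \<open>Let phi_k be the k-th derivative of phi_0(z) = e^{iz/2} / (1 - e^{iz}). The generating
  function is prod_j phi_0(t theta_j), so ((1/t) D_theta)^r G at theta = u equals
  (-i)^{|r|} prod_j phi_{r_j}(t u_j), and the coefficient of hbar^s in V is a finite linear
  combination of the products prod_j phi_{r_j}(x_j), restricted to the line x = t u.
  These products are linearly independent on the torus minus the poles: phi_k has a pole of
  exact order k + 1 at 0, which isolates the top coefficient, one variable at a time.
  The phi_k are 4 pi-periodic and, by Kronecker's theorem, the line t u is dense modulo 4 pi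
  when the u_j are rationally independent; so a combination vanishing on the line vanishes on
  the whole torus, and all its coefficients are zero.\<close>

text \<open>The recursion is chosen so that \<open>phi (Suc k)\<close> is the derivative of \<open>phi k\<close>.\<close>

primrec phi_poly :: "nat \<Rightarrow> complex poly" where
  "phi_poly 0 = 1"
| "phi_poly (Suc k) = smult \<i> (smult (1/2) ([:1,-1:] * phi_poly k) + [:0,1,-1:] * pderiv (phi_poly k)
      + smult (of_nat (Suc k)) ([:0,1:] * phi_poly k))"

definition phi :: "nat \<Rightarrow> complex \<Rightarrow> complex" where
  "phi k z = exp (\<i> * z / 2) * poly (phi_poly k) (exp (\<i> * z)) / (1 - exp (\<i> * z)) ^ Suc k"

lemma has_field_derivative_phi:
  assumes "exp (\<i> * z) \<noteq> 1"
  shows "(phi k has_field_derivative phi (Suc k) z) (at z)"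
proof -
  define w where "w = exp (\<i> * z)"
  define e where "e = exp (\<i> * z / 2)"
  define q where "q = poly (phi_poly k) w"
  define q' where "q' = poly (pderiv (phi_poly k)) w"
  have w: "1 - w \<noteq> 0" using assms by (simp add: w_def)
  have num: "((\<lambda>z. exp (\<i> * z / 2) * poly (phi_poly k) (exp (\<i> * z)))
      has_field_derivative (\<i> * e * ((1/2) * q + w * q'))) (at z)"
    unfolding e_def w_def q_def q'_def
    by (auto intro!: derivative_eq_intros DERIV_chain2[OF poly_DERIV] simp: algebra_simps)
  have den: "((\<lambda>z. (1 - exp (\<i> * z)) ^ Suc k)
      has_field_derivative (- \<i> * of_nat (Suc k) * w * (1 - w) ^ k)) (at z)"
  proof -
    have "((\<lambda>z. exp (\<i> * z)) has_field_derivative \<i> * w) (at z)"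
      unfolding w_def by (auto intro!: derivative_eq_intros)
    from DERIV_power[OF DERIV_diff[OF DERIV_const[of 1] this], of "Suc k"] show ?thesis
      by (simp add: w_def mult_ac)
  qed
  have "phi (Suc k) z = (\<i> * e * ((1/2) * q + w * q') * (1 - w) ^ Suc k
      - e * q * (- \<i> * of_nat (Suc k) * w * (1 - w) ^ k)) / ((1 - w) ^ Suc k * (1 - w) ^ Suc k)"
    using w unfolding phi_def e_def[symmetric] w_def[symmetric] q_def q'_def
    by (simp add: divide_simps) (simp add: algebra_simps)
  then show ?thesis
    unfolding phi_def[abs_def] using DERIV_divide[OF num den] w
    by (simp add: e_def w_def q_def)
qed

lemma partial_prod_eq:
  fixes f :: "nat \<Rightarrow> real \<Rightarrow> complex"
  assumes "open U" "j < n" "\<forall>i<n. \<theta> i \<in> U"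
    and F: "\<And>\<theta>'. \<forall>i<n. \<theta>' i \<in> U \<Longrightarrow> F \<theta>' = (\<Prod>i<n. f i (\<theta>' i))"
    and f': "(f j has_vector_derivative f') (at (\<theta> j))"
  shows "partial j F \<theta> = f' * (\<Prod>i\<in>{..<n}-{j}. f i (\<theta> i))"
proof -
  define C where "C = (\<Prod>i\<in>{..<n}-{j}. f i (\<theta> i))"
  have "F (\<theta>(j := s)) = f j s * C" if "s \<in> U" for s
  proof -
    have "F (\<theta>(j := s)) = (\<Prod>i<n. f i ((\<theta>(j := s)) i))"
      using F assms(3) that by simp
    also have "\<dots> = f j s * (\<Prod>i\<in>{..<n}-{j}. f i ((\<theta>(j := s)) i))"
      using assms(2) by (subst prod.remove[of _ j]) auto
    also have "\<dots> = f j s * C"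
      unfolding C_def by (intro arg_cong[where f = "(*) _"] prod.cong) auto
    finally show ?thesis .
  qed
  then have "((\<lambda>s. F (\<theta>(j := s))) has_vector_derivative f' * C) (at (\<theta> j))"
    using assms by (intro has_vector_derivative_transform_within_open[OF
        has_vector_derivative_mult_left[OF f'] \<open>open U\<close>]) auto
  then show ?thesis
    unfolding partial_def C_def by (rule vector_derivative_at)
qed

text \<open>\<open>dphi t k\<close> is \<open>(-i d/ds)\<^sup>k\<close> applied to \<open>s \<mapsto> phi 0 (t s)\<close>.\<close>

definition dphi :: "real \<Rightarrow> nat \<Rightarrow> real \<Rightarrow> complex" where
  "dphi t k s = (- \<i> * complex_of_real t) ^ k * phi k (complex_of_real (t * s))"

lemma has_vector_derivative_dphi:
  assumes "exp (\<i> * complex_of_real (t * s)) \<noteq> 1"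
  shows "(dphi t k has_vector_derivative \<i> * dphi t (Suc k) s) (at s)"
proof -
  have "((\<lambda>s. complex_of_real (t * s)) has_vector_derivative complex_of_real t) (at s)"
    by (auto intro!: derivative_eq_intros has_vector_derivative_of_real)
  from field_vector_diff_chain_at[OF this has_field_derivative_phi[OF assms]]
  have "((\<lambda>s. phi k (complex_of_real (t * s))) has_vector_derivative
      complex_of_real t * phi (Suc k) (complex_of_real (t * s))) (at s)"
    by (simp add: o_def)
  from has_vector_derivative_mult_right[OF this, of "(- \<i> * complex_of_real t) ^ k"] show ?thesis
    by (simp add: dphi_def[abs_def] mult_ac)
qed

definition gfun_domain :: "nat \<Rightarrow> real \<Rightarrow> (nat \<Rightarrow> real) set" where
  "gfun_domain n t = {\<theta>. \<forall>j<n. exp (\<i> * complex_of_real (t * \<theta> j)) \<noteq> 1}"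

lemma partial_dphi_prod:
  assumes "j < n" and F: "\<forall>\<theta>\<in>gfun_domain n t. F \<theta> = (\<Prod>i<n. dphi t (m i) (\<theta> i))"
  shows "\<forall>\<theta>\<in>gfun_domain n t. - \<i> * partial j F \<theta> = (\<Prod>i<n. dphi t ((m(j := Suc (m j))) i) (\<theta> i))"
proof
  fix \<theta> assume \<theta>: "\<theta> \<in> gfun_domain n t"
  define U where "U = {s. exp (\<i> * complex_of_real (t * s)) \<noteq> 1}"
  have "open U"
    unfolding U_def by (intro open_Collect_neq continuous_intros)
  have "partial j F \<theta> = \<i> * dphi t (Suc (m j)) (\<theta> j) * (\<Prod>i\<in>{..<n}-{j}. dphi t (m i) (\<theta> i))"
    using \<theta> F \<open>j < n\<close>
    by (intro partial_prod_eq[OF \<open>open U\<close>] has_vector_derivative_dphi)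
       (auto simp: U_def gfun_domain_def)
  also have "\<dots> = \<i> * (\<Prod>i<n. dphi t ((m(j := Suc (m j))) i) (\<theta> i))"
    using \<open>j < n\<close> by (subst prod.remove[of _ j]) (auto intro!: prod.cong)
  finally show "- \<i> * partial j F \<theta> = (\<Prod>i<n. dphi t ((m(j := Suc (m j))) i) (\<theta> i))"
    by simp
qed

lemma partial_power_dphi_prod:
  assumes "j < n" and F: "\<forall>\<theta>\<in>gfun_domain n t. F \<theta> = (\<Prod>i<n. dphi t (m i) (\<theta> i))"
  shows "\<forall>\<theta>\<in>gfun_domain n t.
    ((\<lambda>h \<theta>. - \<i> * partial j h \<theta>) ^^ k) F \<theta> = (\<Prod>i<n. dphi t ((m(j := m j + k)) i) (\<theta> i))"
proof (induction k)
  case 0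
  then show ?case using F by simp
next
  case (Suc k)
  have "(m(j := m j + k))(j := Suc ((m(j := m j + k)) j)) = m(j := m j + Suc k)"
    by simp
  with partial_dphi_prod[OF \<open>j < n\<close> Suc.IH] show ?case
    by (simp only: funpow.simps o_apply)
qed

lemma foldr_partial_powers_dphi_prod:
  assumes "distinct js" "set js \<subseteq> {..<n}"
    and F: "\<forall>\<theta>\<in>gfun_domain n t. F \<theta> = (\<Prod>i<n. dphi t (m i) (\<theta> i))"
  shows "\<forall>\<theta>\<in>gfun_domain n t. foldr (\<lambda>j g. ((\<lambda>h \<theta>. - \<i> * partial j h \<theta>) ^^ r j) g) js F \<theta>
     = (\<Prod>i<n. dphi t (m i + (if i \<in> set js then r i else 0)) (\<theta> i))"
  using assms(1,2)
proof (induction js)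
  case Nil
  then show ?case using F by simp
next
  case (Cons j js)
  then have IH: "\<forall>\<theta>\<in>gfun_domain n t. foldr (\<lambda>j g. ((\<lambda>h \<theta>. - \<i> * partial j h \<theta>) ^^ r j) g) js F \<theta>
     = (\<Prod>i<n. dphi t (m i + (if i \<in> set js then r i else 0)) (\<theta> i))"
    by simp
  have "(\<lambda>i. m i + (if i \<in> set js then r i else 0))
      (j := m j + (if j \<in> set js then r j else 0) + r j)
    = (\<lambda>i. m i + (if i \<in> set (j # js) then r i else 0))"
    using Cons.prems by (auto simp: fun_eq_iff)
  with partial_power_dphi_prod[OF _ IH, of j "r j"] Cons.prems show ?case
    by simp
qed

lemma Gfun_eq_dphi_prod: "Gfun n t \<theta> = (\<Prod>i<n. dphi t 0 (\<theta> i))"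
proof -
  have "exp (\<i> * complex_of_real (t / 2 * (\<Sum>i<n. \<theta> i)))
      = (\<Prod>i<n. exp (\<i> * complex_of_real (t * \<theta> i) / 2))"
    by (simp add: exp_sum[symmetric] sum_distrib_left sum_divide_distrib)
  then show ?thesis
    unfolding Gfun_def dphi_def phi_def by (simp add: prod_dividef)
qed

lemma Dpow_Gfun:
  assumes "\<theta> \<in> gfun_domain n t"
  shows "Dpow n r (Gfun n t) \<theta> = (\<Prod>i<n. dphi t (r i) (\<theta> i))"
proof -
  have "Dpow n r (Gfun n t) \<theta> = (\<Prod>i<n. dphi t (0 + (if i \<in> set [0..<n] then r i else 0)) (\<theta> i))"
    unfolding Dpow_def using assms
    by (intro foldr_partial_powers_dphi_prod[rule_format]) (auto simp: Gfun_eq_dphi_prod)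
  then show ?thesis
    by simp
qed

definition phi_prod :: "nat \<Rightarrow> (nat \<Rightarrow> nat) \<Rightarrow> (nat \<Rightarrow> real) \<Rightarrow> complex" where
  "phi_prod n r x = (\<Prod>j<n. phi (r j) (complex_of_real (x j)))"

lemma fterm_eq_phi_prod:
  assumes "t \<noteq> 0" "u \<in> gfun_domain n t"
  shows "fterm n u r t = (- \<i>) ^ mabs n r * phi_prod n r (\<lambda>j. t * u j)"
proof -
  have "Dpow n r (Gfun n t) u
      = complex_of_real t ^ mabs n r * ((- \<i>) ^ mabs n r * phi_prod n r (\<lambda>j. t * u j))"
    unfolding Dpow_Gfun[OF assms(2)] dphi_def phi_prod_def mabs_def power_mult_distrib
    by (simp add: prod.distrib power_sum mult_ac)
  then show ?thesis
    unfolding fterm_def using assms(1) by (simp add: power_one_over)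
qed

lemma phi_poly_at_1: "poly (phi_poly k) 1 = \<i> ^ k * fact k"
  by (induction k) (simp_all add: algebra_simps)

lemma sum_phi_eq_poly:
  assumes "exp (\<i> * z) \<noteq> 1"
  shows "(\<Sum>k\<le>N. e k * phi k z) = exp (\<i> * z / 2) / (1 - exp (\<i> * z)) ^ Suc N
      * poly (\<Sum>k\<le>N. smult (e k) (phi_poly k * [:1, -1:] ^ (N - k))) (exp (\<i> * z))"
proof -
  define w where "w = exp (\<i> * z)"
  have "e k * phi k z = exp (\<i> * z / 2) / (1 - w) ^ Suc N * (e k * poly (phi_poly k) w * (1 - w) ^ (N - k))"
    if "k \<le> N" for k
  proof -
    have split: "(1 - w) ^ Suc N = (1 - w) ^ Suc k * (1 - w) ^ (N - k)"
      using that by (simp flip: power_add)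
    have "a \<noteq> 0 \<Longrightarrow> b \<noteq> 0 \<Longrightarrow> e k * (E * q / a) = E / (a * b) * (e k * q * b)" for a b E q
      by (simp add: field_simps)
    then show ?thesis
      using assms unfolding phi_def w_def[symmetric] split by (simp add: w_def)
  qed
  then show ?thesis
    unfolding w_def[symmetric] by (simp add: poly_sum sum_distrib_left mult_ac)
qed

lemma poly_vanishing_on_circle_at_1:
  assumes "\<And>y. exp (\<i> * complex_of_real y) \<noteq> 1 \<Longrightarrow> poly p (exp (\<i> * complex_of_real y)) = 0"
  shows "poly p 1 = 0"
proof -
  define f where "f y = poly p (exp (\<i> * complex_of_real y))" for y
  have "(f \<longlongrightarrow> f 0) (at_right 0)"
    unfolding f_def by (intro tendsto_intros)
  moreover have "(f \<longlongrightarrow> 0) (at_right 0)"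
  proof (rule tendsto_eventually, unfold eventually_at_right_field, intro exI conjI allI impI)
    fix y :: real assume "0 < y" "y < 2 * pi"
    then have "exp (\<i> * complex_of_real y) \<noteq> 1"
      by (auto simp: exp_eq_1 zero_less_mult_iff)
    then show "f y = 0" using assms f_def by simp
  qed simp
  ultimately have "f 0 = 0"
    by (rule tendsto_unique[rotated]) simp
  then show ?thesis by (simp add: f_def)
qed

lemma phi_top_coeff_zero:
  assumes "\<And>y. exp (\<i> * complex_of_real y) \<noteq> 1 \<Longrightarrow> (\<Sum>k\<le>N. e k * phi k (complex_of_real y)) = 0"
  shows "e N = 0"
proof -
  define p where "p = (\<Sum>k\<le>N. smult (e k) (phi_poly k * [:1, -1:] ^ (N - k)))"
  have "poly p (exp (\<i> * complex_of_real y)) = 0" if "exp (\<i> * complex_of_real y) \<noteq> 1" for y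
    using assms[OF that] sum_phi_eq_poly[OF that, where N = N and e = e] that unfolding p_def by simp
  then have "poly p 1 = 0"
    by (rule poly_vanishing_on_circle_at_1)
  moreover have "poly p 1 = e N * poly (phi_poly N) 1"
    unfolding p_def poly_sum by (subst sum.remove[of _ N]) (auto intro!: sum.neutral)
  ultimately show ?thesis
    by (simp add: phi_poly_at_1)
qed

lemma phi_linear_independent:
  assumes "\<And>y. exp (\<i> * complex_of_real y) \<noteq> 1 \<Longrightarrow> (\<Sum>k\<le>N. e k * phi k (complex_of_real y)) = 0"
  shows "\<forall>k\<le>N. e k = 0"
  using assms
proof (induction N)
  case 0
  then show ?case using phi_top_coeff_zero[where N = 0] by simp
next
  case (Suc N)
  have top: "e (Suc N) = 0"
    using Suc.prems by (rule phi_top_coeff_zero)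
  have "\<forall>k\<le>N. e k = 0"
    using Suc.prems by (intro Suc.IH) (simp add: top)
  with top show ?case
    by (simp add: le_Suc_eq)
qed

lemma phi_prod_Suc:
  "phi_prod (Suc n) r (x(n := y)) = phi_prod n r x * phi (r n) (complex_of_real y)"
  unfolding phi_prod_def by (auto intro!: prod.cong)

text \<open>Grouping the coefficients by the first \<open>n\<close> entries of \<open>r\<close> lets the induction on \<open>n\<close>
  apply to sub-families of \<open>R\<close> without reindexing them.\<close>

lemma phi_prod_grouped_coeffs_zero:
  fixes D :: "(nat \<Rightarrow> nat) \<Rightarrow> complex"
  assumes "finite R"
    and "\<And>x. \<forall>j<n. exp (\<i> * complex_of_real (x j)) \<noteq> 1 \<Longrightarrow> (\<Sum>r\<in>R. D r * phi_prod n r x) = 0"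
  shows "(\<Sum>r\<in>{r\<in>R. \<forall>j<n. r j = r0 j}. D r) = 0"
  using assms
proof (induction n arbitrary: R)
  case 0
  then show ?case by (simp add: phi_prod_def)
next
  case (Suc n)
  define N where "N = Max (insert (r0 n) ((\<lambda>r. r n) ` R))"
  define E where "E x k = (\<Sum>r\<in>{r\<in>R. r n = k}. D r * phi_prod n r x)" for x k
  have "E x (r0 n) = 0" if x: "\<forall>j<n. exp (\<i> * complex_of_real (x j)) \<noteq> 1" for x
  proof -
    have "(\<Sum>k\<le>N. E x k * phi k (complex_of_real y)) = 0"
      if y: "exp (\<i> * complex_of_real y) \<noteq> 1" for y
    proof -
      have "(\<Sum>k\<le>N. E x k * phi k (complex_of_real y))
          = (\<Sum>k\<le>N. \<Sum>r\<in>{r\<in>R. r n = k}. D r * phi_prod (Suc n) r (x(n := y)))"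
        unfolding E_def sum_distrib_right phi_prod_Suc by (auto simp: mult.assoc intro!: sum.cong)
      also have "\<dots> = (\<Sum>r\<in>R. D r * phi_prod (Suc n) r (x(n := y)))"
        using Suc.prems(1) by (intro sum.group) (auto simp: N_def)
      also have "\<dots> = 0"
        using x y by (intro Suc.prems(2)) (simp add: less_Suc_eq)
      finally show ?thesis .
    qed
    then show ?thesis
      using phi_linear_independent[of "E x" N] Suc.prems(1) by (simp add: N_def)
  qed
  then have "(\<Sum>r\<in>{r\<in>{r\<in>R. r n = r0 n}. \<forall>j<n. r j = r0 j}. D r) = 0"
    using Suc.prems(1) by (intro Suc.IH) (simp_all add: E_def)
  moreover have "{r\<in>{r\<in>R. r n = r0 n}. \<forall>j<n. r j = r0 j} = {r\<in>R. \<forall>j<Suc n. r j = r0 j}"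
    by (auto simp: less_Suc_eq)
  ultimately show ?case by simp
qed

lemma phi_prod_linear_independent:
  fixes D :: "(nat \<Rightarrow> nat) \<Rightarrow> complex"
  assumes "finite R" "R \<subseteq> multi_indices n" "r \<in> R"
    and "\<And>x. \<forall>j<n. exp (\<i> * complex_of_real (x j)) \<noteq> 1 \<Longrightarrow> (\<Sum>r\<in>R. D r * phi_prod n r x) = 0"
  shows "D r = 0"
proof -
  have "{r'\<in>R. \<forall>j<n. r' j = r j} = {r}"
    using assms(2,3) by (auto simp: multi_indices_def fun_eq_iff subset_iff) (metis not_le)
  with phi_prod_grouped_coeffs_zero[of R n D r] assms(1,4) show ?thesis by simp
qed

lemma exp_i_periodic:
  "exp (\<i> * complex_of_real (s - 2 * pi * of_int h)) = exp (\<i> * complex_of_real s)"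
proof -
  have "\<i> * complex_of_real (s - 2 * pi * of_int h) = \<i> * complex_of_real s + \<i> * (of_int (- h) * (of_real pi * 2))"
    by (simp add: algebra_simps)
  then show ?thesis
    by (simp only: exp_plus_2pin)
qed

lemma phi_periodic:
  "phi k (complex_of_real (s - 4 * pi * of_int h)) = phi k (complex_of_real s)"
proof -
  have "\<i> * complex_of_real (s - 4 * pi * of_int h) / 2 = \<i> * complex_of_real (s / 2 - 2 * pi * of_int h)"
    "\<i> * complex_of_real (s - 4 * pi * of_int h) = \<i> * complex_of_real (s - 2 * pi * of_int (2 * h))"
    by (simp_all add: field_simps)
  moreover have "\<i> * complex_of_real s / 2 = \<i> * complex_of_real (s / 2)"
    by simp
  ultimately show ?thesis
    unfolding phi_def by (simp only: exp_i_periodic)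
qed

lemma tdom_if_shifted_regular:
  assumes "0 < n" "\<forall>j<n. exp (\<i> * complex_of_real (t * u j - 4 * pi * of_int (h j))) \<noteq> 1"
  shows "t \<in> tdom n u"
proof -
  have "t * u j - 4 * pi * of_int (h j) = t * u j - 2 * pi * of_int (2 * h j)" for j
    by simp
  then have "\<forall>j<n. exp (\<i> * complex_of_real (t * u j)) \<noteq> 1"
    using assms(2) by (simp only: exp_i_periodic)
  moreover from this \<open>0 < n\<close> have "t \<noteq> 0"
    by auto
  ultimately show ?thesis
    by (simp add: tdom_def)
qed

lemma rat_lin_indep_divide:
  assumes "rat_lin_indep n u" "c \<noteq> 0"
  shows "rat_lin_indep n (\<lambda>j. u j / c)"
proof -
  have "(\<Sum>j<n. real_of_rat (q j) * (u j / c)) = (\<Sum>j<n. real_of_rat (q j) * u j) / c" for q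
    by (simp add: sum_divide_distrib)
  then show ?thesis
    using assms unfolding rat_lin_indep_def by simp
qed

lemma rat_lin_indep_inj_on:
  assumes "rat_lin_indep n u"
  shows "inj_on u {..<n}"
proof (rule inj_onI, rule ccontr)
  fix a b assume ab: "a \<in> {..<n}" "b \<in> {..<n}" "u a = u b" "a \<noteq> b"
  define q :: "nat \<Rightarrow> rat" where "q j = (if j = a then 1 else if j = b then -1 else 0)" for j
  have "(\<Sum>j<n. real_of_rat (q j) * u j) = (\<Sum>j\<in>{a, b}. real_of_rat (q j) * u j)"
    using ab by (intro sum.mono_neutral_right) (auto simp: q_def)
  also have "\<dots> = 0"
    using ab by (simp add: q_def)
  finally have "q a = 0"
    using assms ab unfolding rat_lin_indep_def by blast
  then show False
    by (simp add: q_def)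
qed

lemma rat_lin_indep_imp_int_independent:
  assumes "rat_lin_indep n u"
  shows "module.independent (\<lambda>r. (*) (real_of_int r)) (u ` {..<n})"
proof -
  interpret Modules.module "(\<lambda>r. (*) (real_of_int r))"
    by (simp add: Modules.module.intro distrib_left mult.commute)
  show ?thesis
    unfolding independent_explicit_module
  proof (intro allI impI)
    fix T and c :: "real \<Rightarrow> int" and v
    assume T: "finite T" "T \<subseteq> u ` {..<n}" "(\<Sum>v\<in>T. real_of_int (c v) * v) = 0" "v \<in> T"
    define J where "J = {j\<in>{..<n}. u j \<in> T}"
    have TJ: "T = u ` J" and inj: "inj_on u J"
      using T(2) rat_lin_indep_inj_on[OF assms] unfolding J_def by (auto intro: inj_on_subset)
    define q :: "nat \<Rightarrow> rat" where "q j = (if j \<in> J then of_int (c (u j)) else 0)" for j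
    have "(\<Sum>j<n. real_of_rat (q j) * u j) = (\<Sum>j\<in>J. real_of_int (c (u j)) * u j)"
      by (rule sum.mono_neutral_cong_right) (auto simp: q_def J_def)
    also have "\<dots> = 0"
      using T(3) unfolding TJ sum.reindex[OF inj] by simp
    finally have q: "\<forall>j<n. q j = 0"
      using assms unfolding rat_lin_indep_def by blast
    obtain j where j: "j \<in> J" "v = u j"
      using T(4) TJ by blast
    then have "q j = 0"
      using q by (simp add: J_def)
    with j show "c v = 0"
      by (simp add: q_def)
  qed
qed

lemma rat_lin_indep_approx:
  assumes "rat_lin_indep n u" "c \<noteq> 0"
  obtains T :: "nat \<Rightarrow> real" and h :: "nat \<Rightarrow> nat \<Rightarrow> int"
  where "\<And>j. j < n \<Longrightarrow> (\<lambda>N. T N * u j - c * of_int (h N j)) \<longlonglongrightarrow> x j"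
proof -
  define \<theta> where "\<theta> j = u j / c" for j
  have \<theta>: "rat_lin_indep n \<theta>"
    unfolding \<theta>_def using assms by (rule rat_lin_indep_divide)
  have "\<exists>t h. \<forall>j<n. \<bar>t * \<theta> j - of_int (h j) - x j / c\<bar> < 1 / real (Suc N)" for N
  proof (rule Kronecker_thm_1[where \<alpha> = "\<lambda>j. x j / c",
        OF rat_lin_indep_imp_int_independent[OF \<theta>] rat_lin_indep_inj_on[OF \<theta>]])
    fix t h assume "\<And>j. j < n \<Longrightarrow> \<bar>t * \<theta> j - of_int (h j) - x j / c\<bar> < 1 / real (Suc N)"
    then show ?thesis
      by blast
  qed simp
  then obtain T h where Th: "\<And>N j. j < n \<Longrightarrow> \<bar>T N * \<theta> j - of_int (h N j) - x j / c\<bar> < 1 / real (Suc N)"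
    by metis
  have "(\<lambda>N. T N * u j - c * of_int (h N j)) \<longlonglongrightarrow> x j" if "j < n" for j
  proof -
    have "\<forall>N. norm (T N * u j - c * of_int (h N j) - x j) \<le> \<bar>c\<bar> * (1 / real (Suc N))"
    proof
      fix N
      have "T N * u j - c * of_int (h N j) - x j = c * (T N * \<theta> j - of_int (h N j) - x j / c)"
        using assms(2) by (simp add: \<theta>_def field_simps)
      then show "norm (T N * u j - c * of_int (h N j) - x j) \<le> \<bar>c\<bar> * (1 / real (Suc N))"
        using mult_left_mono[OF less_imp_le[OF Th[OF that, of N]] abs_ge_zero[of c]]
        by (simp add: abs_mult)
    qed
    moreover have "(\<lambda>N. \<bar>c\<bar> * (1 / real (Suc N))) \<longlonglongrightarrow> 0"
      using tendsto_mult_right_zero[OF LIMSEQ_inverse_real_of_nat] by (simp add: inverse_eq_divide)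
    ultimately have "(\<lambda>N. T N * u j - c * of_int (h N j) - x j) \<longlonglongrightarrow> 0"
      by (rule Lim_null_comparison[OF always_eventually])
    then show ?thesis
      by (simp add: LIM_zero_iff)
  qed
  then show ?thesis
    using that by blast
qed

lemma tendsto_phi_prod:
  assumes "\<And>j. j < n \<Longrightarrow> (\<lambda>N. y N j) \<longlonglongrightarrow> x j"
    and "\<forall>j<n. exp (\<i> * complex_of_real (x j)) \<noteq> 1"
  shows "(\<lambda>N. phi_prod n r (y N)) \<longlonglongrightarrow> phi_prod n r x"
  unfolding phi_prod_def
proof (rule tendsto_prod)
  fix j assume "j \<in> {..<n}"
  then have "isCont (phi (r j)) (complex_of_real (x j))"
    using assms(2) by (intro DERIV_isCont[OF has_field_derivative_phi]) auto
  with \<open>j \<in> {..<n}\<close> show "(\<lambda>N. phi (r j) (complex_of_real (y N j))) \<longlonglongrightarrow> phi (r j) (complex_of_real (x j))"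
    using assms(1) by (intro isCont_tendsto_compose[where g = "phi (r j)"] tendsto_of_real) auto
qed

lemma sum_phi_prod_zero_off_poles:
  fixes D :: "(nat \<Rightarrow> nat) \<Rightarrow> complex"
  assumes "0 < n" "rat_lin_indep n u"
    and zero_on_ray: "\<And>t. t \<in> tdom n u \<Longrightarrow> (\<Sum>r\<in>R. D r * phi_prod n r (\<lambda>j. t * u j)) = 0"
    and x: "\<forall>j<n. exp (\<i> * complex_of_real (x j)) \<noteq> 1"
  shows "(\<Sum>r\<in>R. D r * phi_prod n r x) = 0"
proof -
  obtain T h where Th: "\<And>j. j < n \<Longrightarrow> (\<lambda>N. T N * u j - 4 * pi * of_int (h N j)) \<longlonglongrightarrow> x j"
    using rat_lin_indep_approx[OF assms(2), of "4 * pi"] by auto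
  define y where "y N j = T N * u j - 4 * pi * of_int (h N j)" for N j
  have "(\<lambda>N. \<Sum>r\<in>R. D r * phi_prod n r (y N)) \<longlonglongrightarrow> (\<Sum>r\<in>R. D r * phi_prod n r x)"
    unfolding y_def using Th x by (intro tendsto_intros tendsto_phi_prod)
  moreover have "eventually (\<lambda>N. (\<Sum>r\<in>R. D r * phi_prod n r (y N)) = 0) sequentially"
  proof -
    have "eventually (\<lambda>N. \<forall>j\<in>{..<n}. exp (\<i> * complex_of_real (y N j)) \<noteq> 1) sequentially"
    proof (rule eventually_ball_finite[OF finite_lessThan], rule ballI)
      fix j assume "j \<in> {..<n}"
      then have "(\<lambda>N. exp (\<i> * complex_of_real (y N j))) \<longlonglongrightarrow> exp (\<i> * complex_of_real (x j))"
        unfolding y_def using Th by (intro tendsto_intros) auto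
      then show "eventually (\<lambda>N. exp (\<i> * complex_of_real (y N j)) \<noteq> 1) sequentially"
        using x \<open>j \<in> {..<n}\<close> by (intro tendsto_imp_eventually_ne) auto
    qed
    then show ?thesis
    proof (rule eventually_mono)
      fix N assume "\<forall>j\<in>{..<n}. exp (\<i> * complex_of_real (y N j)) \<noteq> 1"
      then have "T N \<in> tdom n u"
        unfolding y_def using \<open>0 < n\<close> by (intro tdom_if_shifted_regular) auto
      moreover have "phi_prod n r (y N) = phi_prod n r (\<lambda>j. T N * u j)" for r
        unfolding y_def phi_prod_def phi_periodic ..
      ultimately show "(\<Sum>r\<in>R. D r * phi_prod n r (y N)) = 0"
        using zero_on_ray by simp
    qed
  qed
  then have "(\<lambda>N. \<Sum>r\<in>R. D r * phi_prod n r (y N)) \<longlonglongrightarrow> 0"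
    by (rule tendsto_eventually)
  ultimately show ?thesis
    using LIMSEQ_unique by blast
qed

lemma finite_multi_indices_bounded: "finite {r \<in> multi_indices n. mabs n r \<le> m}"
proof (rule finite_subset)
  have "r j \<le> mabs n r" if "j < n" for r j
    unfolding mabs_def using that by (intro member_le_sum) auto
  then show "{r \<in> multi_indices n. mabs n r \<le> m}
      \<subseteq> {r. \<forall>j. (j \<in> {..<n} \<longrightarrow> r j \<in> {..m}) \<and> (j \<notin> {..<n} \<longrightarrow> r j = 0)}"
    unfolding multi_indices_def by (auto intro: order_trans)
qed (rule finite_set_of_finite_funs; simp)

theorem theorem3:
  fixes n :: nat and u :: "nat \<Rightarrow> real" and c c' :: "(nat \<Rightarrow> nat) \<Rightarrow> nat \<Rightarrow> real" and l :: nat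
  assumes "\<forall>j<n. u j > 0"
    and "rat_lin_indep n u"
    and "\<forall>s\<le>l. \<forall>t\<in>tdom n u. Vcoef n u c s t = Vcoef n u c' s t"
  shows "\<forall>r\<in>multi_indices n. 1 \<le> mabs n r \<longrightarrow>
           (\<forall>i. mabs n r - 1 + i \<le> l \<longrightarrow> c r i = c' r i)"
proof (intro ballI impI allI)
  fix r0 i
  assume r0: "r0 \<in> multi_indices n" "1 \<le> mabs n r0" "mabs n r0 - 1 + i \<le> l"
  define s where "s = mabs n r0 - 1 + i"
  define R where "R = {r \<in> multi_indices n. 1 \<le> mabs n r \<and> mabs n r \<le> s + 1}"
  define D where "D r = complex_of_real (c r (s + 1 - mabs n r) - c' r (s + 1 - mabs n r)) * (- \<i>) ^ mabs n r" for r
  have "0 < n"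
    using r0(2) by (auto simp: mabs_def intro: Nat.gr0I)
  have "finite R"
    by (rule finite_subset[OF _ finite_multi_indices_bounded]) (auto simp: R_def)
  have "(\<Sum>r\<in>R. D r * phi_prod n r (\<lambda>j. t * u j)) = 0" if "t \<in> tdom n u" for t
  proof -
    have "t \<noteq> 0" "u \<in> gfun_domain n t"
      using that by (auto simp: tdom_def gfun_domain_def)
    then have "(\<Sum>r\<in>R. D r * phi_prod n r (\<lambda>j. t * u j)) = Vcoef n u c s t - Vcoef n u c' s t"
      unfolding Vcoef_def R_def D_def
      by (simp add: fterm_eq_phi_prod sum_subtractf[symmetric] algebra_simps)
    also have "\<dots> = 0"
      using assms(3) that r0(3) by (simp add: s_def)
    finally show ?thesis .
  qed
  then have "D r0 = 0"
    using \<open>finite R\<close> r0 sum_phi_prod_zero_off_poles[OF \<open>0 < n\<close> assms(2)]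
    by (intro phi_prod_linear_independent[of R n r0 D]) (auto simp: R_def s_def)
  moreover have "s + 1 - mabs n r0 = i"
    using r0(2) by (simp add: s_def)
  ultimately show "c r0 i = c' r0 i"
    by (simp add: D_def)
qed

end
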